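(* For every $n\ge1$ and every choice of coefficients there exist a real polynomial $P$ of degree at most $2n+1$ and a real polynomial $Q$ of degree at most $[\frac{n-1}{2}]$ such that for all $u\in(0,+\infty)$, $$M(u^4+u^2)=u\,P(u)+(u^4+u^2)\,Q(u^4+u^2)\int_0^{1/\sqrt{1+u^2}}\sqrt{1-t^2}\,dt.$$
   Context: Fix an integer $n\ge 1$ and real coefficients $a^k_{i,j},b^k_{i,j}$ ($k=1,2,3,4$; $i+j\le n$), $f_k=\sum_{0\le i+j\le n}a^k_{i,j}x^iy^j$, $g_k=\sum_{0\le i+j\le n}b^k_{i,j}x^iy^j$. For $h>0$ let $u(h)=\sqrt{(\sqrt{1+4h}-1)/2}$ (the unique positive number with $u^4+u^2=h$), $\Gamma_h$ the circle $x^2+y^2=h$, and $A=(u,u^2)$, $B=(u,-u^2)$, $C=(-u,-u^2)$, $D=(-u,u^2)$. Let $\widehat{AB},\widehat{BC},\widehat{CD},\widehat{DA}$ be the arcs of $\Gamma_h$ traversed clockwise from $A$ to $B$ (through $(\sqrt h,0)$), $B$ to $C$ (through $(0,-\sqrt h)$), $C$ to $D$ (through $(-\sqrt h,0)$), $D$ to $A$ (through $(0,\sqrt h)$). Define $$M(h)=\int_{\widehat{AB}}g_1dx-f_1dy+\int_{\widehat{BC}}g_2dx-f_2dy+\int_{\widehat{CD}}g_3dx-f_3dy+\int_{\widehat{DA}}g_4dx-f_4dy,\quad h>0.$$ $[p]$ is the integer part of $p$. *)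

theory Defs
  imports "HOL-Analysis.Analysis" "HOL-Computational_Algebra.Polynomial"
begin

definition bipoly :: "(nat \<Rightarrow> nat \<Rightarrow> real) \<Rightarrow> nat \<Rightarrow> real \<Rightarrow> real \<Rightarrow> real" where
  "bipoly c n x y = (\<Sum>i\<le>n. \<Sum>j\<le>n - i. c i j * x ^ i * y ^ j)"

text \<open>u(h): the unique positive number with u^4+u^2=h.\<close>
definition uh :: "real \<Rightarrow> real" where
  "uh h = sqrt ((sqrt (1 + 4 * h) - 1) / 2)"

text \<open>Line integral of g dx - f dy along the arc of the circle x^2+y^2=h,
  parametrized by (sqrt h cos t, sqrt h sin t), traversed clockwise from
  angle t0 to angle t1 (t1 \<le> t0).\<close>
definition arc_int :: "(real \<Rightarrow> real \<Rightarrow> real) \<Rightarrow> (real \<Rightarrow> real \<Rightarrow> real) \<Rightarrow> real \<Rightarrow> real \<Rightarrow> real \<Rightarrow> real" where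
  "arc_int f g h t0 t1 =
     - integral {t1..t0} (\<lambda>t. g (sqrt h * cos t) (sqrt h * sin t) * (- sqrt h * sin t)
                              - f (sqrt h * cos t) (sqrt h * sin t) * (sqrt h * cos t))"

text \<open>Coefficients a k i j = a^k_{i,j}, b k i j = b^k_{i,j}, k = 1..4.
  The point A=(u,u^2) has polar angle arctan u =: \<alpha>; B, C, D have angles
  -\<alpha>, \<pi>+\<alpha> (= \<alpha>-\<pi>), \<pi>-\<alpha>.\<close>
definition Mfun :: "nat \<Rightarrow> (nat \<Rightarrow> nat \<Rightarrow> nat \<Rightarrow> real) \<Rightarrow> (nat \<Rightarrow> nat \<Rightarrow> nat \<Rightarrow> real) \<Rightarrow> real \<Rightarrow> real" where
  "Mfun n a b h =
     (let \<alpha> = arctan (uh h); F = (\<lambda>k. bipoly (a k) n); G = (\<lambda>k. bipoly (b k) n) in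
        arc_int (F 1) (G 1) h \<alpha> (- \<alpha>)
      + arc_int (F 2) (G 2) h (- \<alpha>) (\<alpha> - pi)
      + arc_int (F 3) (G 3) h (pi + \<alpha>) (pi - \<alpha>)
      + arc_int (F 4) (G 4) h (pi - \<alpha>) \<alpha>)"

end

theory Submission
  imports Defs
begin

text \<open>
  Along the circle of radius s, with x = s cos t and y = s sin t, differentiating
  x^(p+1) y^(q+1) and using x^2 + y^2 = s^2 gives the classical reduction formulas for
  \<integral> cos^p t sin^q t dt. Hence x^p y^q has an antiderivative \<kappa> s^(p+q) t + G(x, y) in t,
  with G homogeneous of degree p + q and \<kappa> = 0 unless p + q is even. For h = u^4 + u^2 the
  corners of the contour are (\<plusminus>u, \<plusminus>u^2), at angles \<plusminus>arctan u and \<pi> \<plusminus> arctan u, so G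
  contributes a polynomial in u vanishing at 0, and the angular term a polynomial in h times
  arctan u. Finally the area of a circular segment,
  arctan u = \<pi>/2 + u/(1 + u^2) - 2 \<integral>[0, 1/\<surd>(1 + u^2)] \<surd>(1 - t^2) dt,
  turns the arctan term into the stated integral, and what remains is a polynomial u P(u).
\<close>

inductive hom_poly :: "nat \<Rightarrow> (real \<Rightarrow> real \<Rightarrow> real) \<Rightarrow> bool" where
  hom_poly_const: "hom_poly 0 (\<lambda>x y. c)"
| hom_poly_x: "hom_poly 1 (\<lambda>x y. x)"
| hom_poly_y: "hom_poly 1 (\<lambda>x y. y)"
| hom_poly_add: "hom_poly m f \<Longrightarrow> hom_poly m g \<Longrightarrow> hom_poly m (\<lambda>x y. f x y + g x y)"
| hom_poly_mult: "hom_poly k f \<Longrightarrow> hom_poly l g \<Longrightarrow> hom_poly (k + l) (\<lambda>x y. f x y * g x y)"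

lemma hom_poly_cmult: "hom_poly m f \<Longrightarrow> hom_poly m (\<lambda>x y. c * f x y)"
  using hom_poly_mult[OF hom_poly_const] by fastforce

lemma hom_poly_divide: "hom_poly m f \<Longrightarrow> hom_poly m (\<lambda>x y. f x y / c)"
  using hom_poly_cmult[of m f "inverse c"] by (simp add: divide_inverse mult.commute)

lemma hom_poly_diff: "hom_poly m f \<Longrightarrow> hom_poly m g \<Longrightarrow> hom_poly m (\<lambda>x y. f x y - g x y)"
  using hom_poly_add[OF _ hom_poly_cmult[of m g "-1"]] by simp

lemma hom_poly_power: "hom_poly k f \<Longrightarrow> hom_poly (k * j) (\<lambda>x y. f x y ^ j)"
proof (induction j)
  case 0
  show ?case using hom_poly_const[of 1] by simp
next
  case (Suc j)
  then show ?case using hom_poly_mult[OF Suc.prems Suc.IH] by (simp add: add.commute)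
qed

lemma hom_poly_monomial: "hom_poly (i + j) (\<lambda>x y. x ^ i * y ^ j)"
  using hom_poly_mult[OF hom_poly_power[OF hom_poly_x] hom_poly_power[OF hom_poly_y]] by simp

lemma hom_poly_norm2: "hom_poly 2 (\<lambda>x y. x\<^sup>2 + y\<^sup>2)"
  using hom_poly_add[OF hom_poly_power[OF hom_poly_x, of 2] hom_poly_power[OF hom_poly_y, of 2]] by simp

lemma hom_poly_zero_at_origin: "hom_poly m G \<Longrightarrow> 0 < m \<Longrightarrow> G 0 0 = 0"
  by (induction rule: hom_poly.induct) auto

lemma hom_poly_compose_poly:
  assumes "hom_poly m G" "degree X \<le> d" "degree Y \<le> d"
  shows "\<exists>R. degree R \<le> d * m \<and> (\<forall>u. G (poly X u) (poly Y u) = poly R u)"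
  using assms(1)
proof induction
  case (hom_poly_const c)
  show ?case by (intro exI[of _ "[:c:]"]) simp
next
  case hom_poly_x
  show ?case using assms by (intro exI[of _ X]) simp
next
  case hom_poly_y
  show ?case using assms by (intro exI[of _ Y]) simp
next
  case (hom_poly_add m f g)
  then obtain R S where "degree R \<le> d * m" "degree S \<le> d * m"
    "\<forall>u. f (poly X u) (poly Y u) = poly R u" "\<forall>u. g (poly X u) (poly Y u) = poly S u"
    by blast
  then show ?case by (intro exI[of _ "R + S"]) (simp add: degree_add_le)
next
  case (hom_poly_mult k f l g)
  then obtain R S where "degree R \<le> d * k" "degree S \<le> d * l"
    "\<forall>u. f (poly X u) (poly Y u) = poly R u" "\<forall>u. g (poly X u) (poly Y u) = poly S u"
    by blast
  moreover have "degree (R * S) \<le> d * (k + l)"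
    using degree_mult_le[of R S] calculation(1,2) by (simp add: distrib_left)
  ultimately show ?case by (intro exI[of _ "R * S"]) simp
qed

lemma has_real_derivative_circle_monomial:
  "((\<lambda>t. (s * cos t) ^ (p + 1) * (s * sin t) ^ (q + 1)) has_real_derivative
     real (q + 1) * ((s * cos t) ^ (p + 2) * (s * sin t) ^ q)
     - real (p + 1) * ((s * cos t) ^ p * (s * sin t) ^ (q + 2))) (at t)"
proof -
  have dx: "((\<lambda>t. (s * cos t) ^ Suc p) has_real_derivative real (Suc p) * (s * cos t) ^ p * (- s * sin t)) (at t)"
    using DERIV_power_Suc[OF DERIV_cmult[OF DERIV_cos[of t]], of s p] by (simp add: algebra_simps)
  have dy: "((\<lambda>t. (s * sin t) ^ Suc q) has_real_derivative real (Suc q) * (s * sin t) ^ q * (s * cos t)) (at t)"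
    using DERIV_power_Suc[OF DERIV_cmult[OF DERIV_sin[of t]], of s q] by (simp add: algebra_simps)
  show ?thesis
    using DERIV_mult[OF dx dy] by (simp add: power_add power_Suc algebra_simps)
qed

lemma norm2_circle_point: "(s * cos t)\<^sup>2 + (s * sin t)\<^sup>2 = (s::real)\<^sup>2"
  by (metis power_mult_distrib distrib_left mult.right_neutral sin_cos_squared_add2)

lemma circle_monomial_pythagoras:
  fixes s t :: real
  shows "s\<^sup>2 * ((s * cos t) ^ p * (s * sin t) ^ q)
     = (s * cos t) ^ (p + 2) * (s * sin t) ^ q + (s * cos t) ^ p * (s * sin t) ^ (q + 2)"
  unfolding norm2_circle_point[of s t, symmetric] by (simp add: power_add power2_eq_square algebra_simps)

lemma has_real_derivative_reduction:
  assumes F: "(F has_real_derivative (s * cos t) ^ p * (s * sin t) ^ q) (at t)"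
  shows "((\<lambda>t. ((s * cos t) ^ (p + 1) * (s * sin t) ^ (q + 1) + real (p + 1) * s\<^sup>2 * F t)
            / real (p + q + 2)) has_real_derivative (s * cos t) ^ (p + 2) * (s * sin t) ^ q) (at t)"
    and "((\<lambda>t. (real (q + 1) * s\<^sup>2 * F t - (s * cos t) ^ (p + 1) * (s * sin t) ^ (q + 1))
            / real (p + q + 2)) has_real_derivative (s * cos t) ^ p * (s * sin t) ^ (q + 2)) (at t)"
proof -
  let ?A = "(s * cos t) ^ (p + 2) * (s * sin t) ^ q"
  let ?B = "(s * cos t) ^ p * (s * sin t) ^ (q + 2)"
  have mono: "((\<lambda>t. (s * cos t) ^ (p + 1) * (s * sin t) ^ (q + 1)) has_real_derivative
      real (q + 1) * ?A - real (p + 1) * ?B) (at t)"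
    by (rule has_real_derivative_circle_monomial)
  have F': "((\<lambda>t. real k * s\<^sup>2 * F t) has_real_derivative real k * (?A + ?B)) (at t)" for k
    using DERIV_cmult[OF F, of "real k * s\<^sup>2"] by (simp only: mult.assoc circle_monomial_pythagoras)
  have A: "(real (q + 1) * A - real (p + 1) * B + real (p + 1) * (A + B)) / real (p + q + 2) = A"
    and B: "(real (q + 1) * (A + B) - (real (q + 1) * A - real (p + 1) * B)) / real (p + q + 2) = B"
    for A B :: real
    by (simp_all add: field_simps)
  show "((\<lambda>t. ((s * cos t) ^ (p + 1) * (s * sin t) ^ (q + 1) + real (p + 1) * s\<^sup>2 * F t)
            / real (p + q + 2)) has_real_derivative ?A) (at t)"
    using DERIV_cdivide[OF DERIV_add[OF mono F'[of "p + 1"]], where c = "real (p + q + 2)"] unfolding A .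
  show "((\<lambda>t. (real (q + 1) * s\<^sup>2 * F t - (s * cos t) ^ (p + 1) * (s * sin t) ^ (q + 1))
            / real (p + q + 2)) has_real_derivative ?B) (at t)"
    using DERIV_cdivide[OF DERIV_diff[OF F'[of "q + 1"] mono], where c = "real (p + q + 2)"] unfolding B .
qed

text \<open>\<kappa> must vanish in odd degree so that \<kappa> s^(p+q) is a polynomial in s^2 = u^4 + u^2.\<close>

definition polar_antideriv :: "nat \<Rightarrow> nat \<Rightarrow> real \<Rightarrow> (real \<Rightarrow> real \<Rightarrow> real) \<Rightarrow> bool" where
  "polar_antideriv p q \<kappa> G \<longleftrightarrow> hom_poly (p + q) G \<and> (odd (p + q) \<longrightarrow> \<kappa> = 0) \<and>
     (\<forall>s t. ((\<lambda>t. \<kappa> * s ^ (p + q) * t + G (s * cos t) (s * sin t)) has_real_derivative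
        (s * cos t) ^ p * (s * sin t) ^ q) (at t))"

lemma polar_antideriv_step_cos:
  assumes "polar_antideriv p q \<kappa> G"
  shows "polar_antideriv (p + 2) q (real (p + 1) * \<kappa> / real (p + q + 2))
    (\<lambda>x y. (x ^ (p + 1) * y ^ (q + 1) + real (p + 1) * ((x\<^sup>2 + y\<^sup>2) * G x y)) / real (p + q + 2))"
proof -
  from assms have G: "hom_poly (p + q) G" and \<kappa>: "odd (p + q) \<longrightarrow> \<kappa> = 0"
    and F: "\<And>s t. ((\<lambda>t. \<kappa> * s ^ (p + q) * t + G (s * cos t) (s * sin t)) has_real_derivative
      (s * cos t) ^ p * (s * sin t) ^ q) (at t)"
    unfolding polar_antideriv_def by blast+
  have "hom_poly (p + 2 + q) (\<lambda>x y. x ^ (p + 1) * y ^ (q + 1))"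
    "hom_poly (p + 2 + q) (\<lambda>x y. (x\<^sup>2 + y\<^sup>2) * G x y)"
    using hom_poly_monomial[of "p + 1" "q + 1"] hom_poly_mult[OF hom_poly_norm2 G] by (simp_all add: add_ac)
  then have "hom_poly (p + 2 + q)
      (\<lambda>x y. (x ^ (p + 1) * y ^ (q + 1) + real (p + 1) * ((x\<^sup>2 + y\<^sup>2) * G x y)) / real (p + q + 2))"
    by (intro hom_poly_divide hom_poly_add hom_poly_cmult)
  moreover have "((\<lambda>t. real (p + 1) * \<kappa> / real (p + q + 2) * s ^ (p + 2 + q) * t
      + ((s * cos t) ^ (p + 1) * (s * sin t) ^ (q + 1)
         + real (p + 1) * (((s * cos t)\<^sup>2 + (s * sin t)\<^sup>2) * G (s * cos t) (s * sin t))) / real (p + q + 2))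
      has_real_derivative (s * cos t) ^ (p + 2) * (s * sin t) ^ q) (at t)" for s t
  proof -
    have "(\<lambda>t. real (p + 1) * \<kappa> / real (p + q + 2) * s ^ (p + 2 + q) * t
      + ((s * cos t) ^ (p + 1) * (s * sin t) ^ (q + 1)
         + real (p + 1) * (((s * cos t)\<^sup>2 + (s * sin t)\<^sup>2) * G (s * cos t) (s * sin t))) / real (p + q + 2))
      = (\<lambda>t. ((s * cos t) ^ (p + 1) * (s * sin t) ^ (q + 1)
         + real (p + 1) * s\<^sup>2 * (\<kappa> * s ^ (p + q) * t + G (s * cos t) (s * sin t))) / real (p + q + 2))"
      unfolding norm2_circle_point
      by (simp add: diff_divide_distrib add_divide_distrib power_add power2_eq_square algebra_simps)
    then show ?thesis
      using has_real_derivative_reduction(1)[OF F] by simp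
  qed
  ultimately show ?thesis
    using \<kappa> unfolding polar_antideriv_def by auto
qed

lemma polar_antideriv_step_sin:
  assumes "polar_antideriv p q \<kappa> G"
  shows "polar_antideriv p (q + 2) (real (q + 1) * \<kappa> / real (p + q + 2))
    (\<lambda>x y. (real (q + 1) * ((x\<^sup>2 + y\<^sup>2) * G x y) - x ^ (p + 1) * y ^ (q + 1)) / real (p + q + 2))"
proof -
  from assms have G: "hom_poly (p + q) G" and \<kappa>: "odd (p + q) \<longrightarrow> \<kappa> = 0"
    and F: "\<And>s t. ((\<lambda>t. \<kappa> * s ^ (p + q) * t + G (s * cos t) (s * sin t)) has_real_derivative
      (s * cos t) ^ p * (s * sin t) ^ q) (at t)"
    unfolding polar_antideriv_def by blast+
  have "hom_poly (p + (q + 2)) (\<lambda>x y. x ^ (p + 1) * y ^ (q + 1))"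
    "hom_poly (p + (q + 2)) (\<lambda>x y. (x\<^sup>2 + y\<^sup>2) * G x y)"
    using hom_poly_monomial[of "p + 1" "q + 1"] hom_poly_mult[OF hom_poly_norm2 G] by (simp_all add: add_ac)
  then have "hom_poly (p + (q + 2))
      (\<lambda>x y. (real (q + 1) * ((x\<^sup>2 + y\<^sup>2) * G x y) - x ^ (p + 1) * y ^ (q + 1)) / real (p + q + 2))"
    by (intro hom_poly_divide hom_poly_diff hom_poly_cmult)
  moreover have "((\<lambda>t. real (q + 1) * \<kappa> / real (p + q + 2) * s ^ (p + (q + 2)) * t
      + (real (q + 1) * (((s * cos t)\<^sup>2 + (s * sin t)\<^sup>2) * G (s * cos t) (s * sin t))
         - (s * cos t) ^ (p + 1) * (s * sin t) ^ (q + 1)) / real (p + q + 2))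
      has_real_derivative (s * cos t) ^ p * (s * sin t) ^ (q + 2)) (at t)" for s t
  proof -
    have "(\<lambda>t. real (q + 1) * \<kappa> / real (p + q + 2) * s ^ (p + (q + 2)) * t
      + (real (q + 1) * (((s * cos t)\<^sup>2 + (s * sin t)\<^sup>2) * G (s * cos t) (s * sin t))
         - (s * cos t) ^ (p + 1) * (s * sin t) ^ (q + 1)) / real (p + q + 2))
      = (\<lambda>t. (real (q + 1) * s\<^sup>2 * (\<kappa> * s ^ (p + q) * t + G (s * cos t) (s * sin t))
         - (s * cos t) ^ (p + 1) * (s * sin t) ^ (q + 1)) / real (p + q + 2))"
      unfolding norm2_circle_point
      by (simp add: diff_divide_distrib add_divide_distrib power_add power2_eq_square algebra_simps)
    then show ?thesis
      using has_real_derivative_reduction(2)[OF F] by simp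
  qed
  ultimately show ?thesis
    using \<kappa> unfolding polar_antideriv_def by auto
qed

lemma polar_antideriv_base:
  assumes "p < 2" "q < 2"
  shows "\<exists>\<kappa> G. polar_antideriv p q \<kappa> G"
proof -
  have "hom_poly 1 (\<lambda>x y. - x)" "hom_poly 2 (\<lambda>x y. y\<^sup>2 / 2)"
    using hom_poly_cmult[OF hom_poly_x, of "-1"] hom_poly_divide[OF hom_poly_power[OF hom_poly_y, of 2]]
    by simp_all
  then have "polar_antideriv 0 0 1 (\<lambda>x y. 0)" "polar_antideriv 1 0 0 (\<lambda>x y. y)"
    "polar_antideriv 0 1 0 (\<lambda>x y. - x)" "polar_antideriv 1 1 0 (\<lambda>x y. y\<^sup>2 / 2)"
    unfolding polar_antideriv_def one_add_one using hom_poly_const hom_poly_y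
    by (auto intro!: derivative_eq_intros simp: power2_eq_square)
  moreover have "p = 0 \<or> p = 1" "q = 0 \<or> q = 1"
    using assms by auto
  ultimately show ?thesis by blast
qed

lemma polar_antideriv_exists: "\<exists>\<kappa> G. polar_antideriv p q \<kappa> G"
proof (induction "p + q" arbitrary: p q rule: less_induct)
  case less
  consider "2 \<le> p" | "2 \<le> q" | "p < 2" "q < 2"
    by linarith
  then show ?case
  proof cases
    case 1
    then obtain \<kappa> G where "polar_antideriv (p - 2) q \<kappa> G"
      using less[of "p - 2" q] by auto
    then have "\<exists>\<kappa> G. polar_antideriv (p - 2 + 2) q \<kappa> G"
      by (blast intro: polar_antideriv_step_cos)
    then show ?thesis
      using 1 by (simp only: le_add_diff_inverse2)
  next
    case 2
    then obtain \<kappa> G where "polar_antideriv p (q - 2) \<kappa> G"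
      using less[of p "q - 2"] by auto
    then have "\<exists>\<kappa> G. polar_antideriv p (q - 2 + 2) \<kappa> G"
      by (blast intro: polar_antideriv_step_sin)
    then show ?thesis
      using 2 by (simp only: le_add_diff_inverse2)
  next
    case 3
    then show ?thesis by (rule polar_antideriv_base)
  qed
qed

lemma integral_polar_antideriv:
  assumes "polar_antideriv p q \<kappa> G" "a \<le> b"
  shows "integral {a..b} (\<lambda>t. (s * cos t) ^ p * (s * sin t) ^ q)
    = \<kappa> * s ^ (p + q) * (b - a) + G (s * cos b) (s * sin b) - G (s * cos a) (s * sin a)"
proof -
  have "((\<lambda>t. (s * cos t) ^ p * (s * sin t) ^ q) has_integral
    (\<kappa> * s ^ (p + q) * b + G (s * cos b) (s * sin b)) - (\<kappa> * s ^ (p + q) * a + G (s * cos a) (s * sin a))) {a..b}"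
  proof (rule fundamental_theorem_of_calculus)
    fix t
    have "((\<lambda>t. \<kappa> * s ^ (p + q) * t + G (s * cos t) (s * sin t)) has_real_derivative
        (s * cos t) ^ p * (s * sin t) ^ q) (at t)"
      using assms(1) unfolding polar_antideriv_def by blast
    then show "((\<lambda>t. \<kappa> * s ^ (p + q) * t + G (s * cos t) (s * sin t)) has_vector_derivative
        (s * cos t) ^ p * (s * sin t) ^ q) (at t within {a..b})"
      by (simp add: has_real_derivative_iff_has_vector_derivative[symmetric] has_field_derivative_at_within)
  qed (fact assms(2))
  from integral_unique[OF this] show ?thesis
    by (simp add: algebra_simps)
qed

definition poly_endpoint :: "(real \<Rightarrow> real) \<Rightarrow> bool" where
  "poly_endpoint \<theta> \<longleftrightarrow> (\<exists>X Y :: real poly. degree X \<le> 2 \<and> degree Y \<le> 2 \<and> poly X 0 = 0 \<and> poly Y 0 = 0 \<and>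
     (\<forall>u>0. sqrt (u ^ 4 + u\<^sup>2) * cos (\<theta> u) = poly X u \<and> sqrt (u ^ 4 + u\<^sup>2) * sin (\<theta> u) = poly Y u))"

lemma poly_endpoint_arctan: "poly_endpoint arctan"
proof -
  have "sqrt (u ^ 4 + u\<^sup>2) * cos (arctan u) = u \<and> sqrt (u ^ 4 + u\<^sup>2) * sin (arctan u) = u\<^sup>2"
    if "u > 0" for u :: real
  proof -
    have "sqrt (u ^ 4 + u\<^sup>2) = u * sqrt (1 + u\<^sup>2)"
      using that real_sqrt_mult[of "u\<^sup>2" "1 + u\<^sup>2"] by (simp add: algebra_simps flip: power_add)
    moreover have "sqrt (1 + u\<^sup>2) > 0"
      by (simp add: add_pos_nonneg)
    ultimately show ?thesis
      by (simp add: cos_arctan sin_arctan power2_eq_square)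
  qed
  then show ?thesis
    unfolding poly_endpoint_def by (intro exI[of _ "[:0, 1:]"] exI[of _ "[:0, 0, 1:]"]) (simp add: power2_eq_square)
qed

lemma poly_endpoint_reflect:
  assumes "poly_endpoint \<theta>" "\<And>u. 0 < u \<Longrightarrow> cos (\<theta>' u) = a * cos (\<theta> u) \<and> sin (\<theta>' u) = b * sin (\<theta> u)"
  shows "poly_endpoint \<theta>'"
proof -
  obtain X Y :: "real poly" where "degree X \<le> 2" "degree Y \<le> 2" "poly X 0 = 0" "poly Y 0 = 0"
    and XY: "\<forall>u>0. sqrt (u ^ 4 + u\<^sup>2) * cos (\<theta> u) = poly X u \<and> sqrt (u ^ 4 + u\<^sup>2) * sin (\<theta> u) = poly Y u"
    using assms(1) unfolding poly_endpoint_def by blast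
  then show ?thesis
    unfolding poly_endpoint_def using assms(2)
    by (intro exI[of _ "smult a X"] exI[of _ "smult b Y"]) (auto simp: algebra_simps)
qed

lemma hom_poly_at_poly_endpoint:
  assumes "hom_poly m G" "0 < m" "poly_endpoint \<theta>"
  shows "\<exists>R. degree R \<le> 2 * m \<and> poly R 0 = 0 \<and>
    (\<forall>u>0. G (sqrt (u ^ 4 + u\<^sup>2) * cos (\<theta> u)) (sqrt (u ^ 4 + u\<^sup>2) * sin (\<theta> u)) = poly R u)"
proof -
  obtain X Y :: "real poly" where XY: "degree X \<le> 2" "degree Y \<le> 2" "poly X 0 = 0" "poly Y 0 = 0"
    "\<forall>u>0. sqrt (u ^ 4 + u\<^sup>2) * cos (\<theta> u) = poly X u \<and> sqrt (u ^ 4 + u\<^sup>2) * sin (\<theta> u) = poly Y u"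
    using assms(3) unfolding poly_endpoint_def by blast
  obtain R where "degree R \<le> 2 * m" and R: "\<forall>u. G (poly X u) (poly Y u) = poly R u"
    using hom_poly_compose_poly[OF assms(1) XY(1,2)] by blast
  moreover have "poly R 0 = 0"
    using R[rule_format, of 0] XY(3,4) hom_poly_zero_at_origin[OF assms(1,2)] by simp
  ultimately show ?thesis
    using XY(5) by auto
qed

definition quartic :: "real poly" where
  "quartic = [:0, 0, 1, 0, 1:]"

lemma poly_quartic: "poly quartic u = u ^ 4 + u\<^sup>2"
  by (simp add: quartic_def algebra_simps power2_eq_square power4_eq_xxxx)

lemma degree_quartic: "degree quartic = 4"
  by (simp add: quartic_def)

definition arctan_form :: "nat \<Rightarrow> (real \<Rightarrow> real) \<Rightarrow> bool" where
  "arctan_form N f \<longleftrightarrow> (\<exists>R T :: real poly. degree R \<le> 2 * N \<and> poly R 0 = 0 \<and>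
     degree T \<le> N div 2 \<and> poly T 0 = 0 \<and> (\<forall>u>0. f u = poly R u + poly T (u ^ 4 + u\<^sup>2) * arctan u))"

lemma arctan_form_poly: "degree R \<le> 2 * N \<Longrightarrow> poly R 0 = 0 \<Longrightarrow> arctan_form N (poly R)"
  unfolding arctan_form_def by (intro exI[of _ R] exI[of _ 0]) simp

lemma arctan_form_add:
  assumes "arctan_form N f" "arctan_form N g"
  shows "arctan_form N (\<lambda>u. f u + g u)"
proof -
  obtain R T R' T' :: "real poly" where
    "degree R \<le> 2 * N" "poly R 0 = 0" "degree T \<le> N div 2" "poly T 0 = 0"
    "\<forall>u>0. f u = poly R u + poly T (u ^ 4 + u\<^sup>2) * arctan u"
    "degree R' \<le> 2 * N" "poly R' 0 = 0" "degree T' \<le> N div 2" "poly T' 0 = 0"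
    "\<forall>u>0. g u = poly R' u + poly T' (u ^ 4 + u\<^sup>2) * arctan u"
    using assms unfolding arctan_form_def by blast
  then show ?thesis
    unfolding arctan_form_def by (intro exI[of _ "R + R'"] exI[of _ "T + T'"])
      (auto simp: degree_add_le algebra_simps)
qed

lemma arctan_form_cmult:
  assumes "arctan_form N f"
  shows "arctan_form N (\<lambda>u. c * f u)"
proof -
  obtain R T :: "real poly" where
    "degree R \<le> 2 * N" "poly R 0 = 0" "degree T \<le> N div 2" "poly T 0 = 0"
    "\<forall>u>0. f u = poly R u + poly T (u ^ 4 + u\<^sup>2) * arctan u"
    using assms unfolding arctan_form_def by blast
  then show ?thesis
    unfolding arctan_form_def by (intro exI[of _ "smult c R"] exI[of _ "smult c T"])
      (auto simp: order.trans[OF degree_smult_le] algebra_simps)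
qed

lemma arctan_form_sum:
  "finite I \<Longrightarrow> (\<And>i. i \<in> I \<Longrightarrow> arctan_form N (f i)) \<Longrightarrow> arctan_form N (\<lambda>u. \<Sum>i\<in>I. f i u)"
proof (induction I rule: finite_induct)
  case empty
  show ?case
    unfolding arctan_form_def by (intro exI[of _ 0]) simp
next
  case (insert i I)
  then show ?case using arctan_form_add[of N "f i"] by simp
qed

lemma arctan_form_mono: "arctan_form N f \<Longrightarrow> N \<le> N' \<Longrightarrow> arctan_form N' f"
  unfolding arctan_form_def by (meson div_le_mono mult_le_mono2 order_trans)

lemma arctan_form_cong: "arctan_form N f \<Longrightarrow> (\<And>u. 0 < u \<Longrightarrow> f u = g u) \<Longrightarrow> arctan_form N g"
  unfolding arctan_form_def by auto

lemma arctan_form_power: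
  assumes "1 \<le> k" "2 * k \<le> N"
  shows "arctan_form N (\<lambda>u. (u ^ 4 + u\<^sup>2) ^ k * (a * arctan u + b))"
proof -
  have "degree (smult b (quartic ^ k)) \<le> 2 * N"
    using degree_power_le[of quartic k] assms(2) by (simp add: degree_quartic order.trans[OF degree_smult_le])
  moreover have "degree (monom a k) \<le> N div 2"
    using assms(2) by (simp add: order.trans[OF degree_monom_le])
  ultimately show ?thesis
    unfolding arctan_form_def using assms(1)
    by (intro exI[of _ "smult b (quartic ^ k)"] exI[of _ "monom a k"])
      (auto simp: poly_quartic poly_monom algebra_simps)
qed

lemma arctan_form_arc_monomial:
  assumes "0 < p + q" "poly_endpoint \<theta>\<^sub>0" "poly_endpoint \<theta>\<^sub>1"
    and "\<And>u. 0 < u \<Longrightarrow> \<theta>\<^sub>1 u \<le> \<theta>\<^sub>0 u"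
    and "\<And>u. 0 < u \<Longrightarrow> \<theta>\<^sub>0 u - \<theta>\<^sub>1 u = a * arctan u + b"
  shows "arctan_form (p + q) (\<lambda>u. integral {\<theta>\<^sub>1 u..\<theta>\<^sub>0 u}
    (\<lambda>t. (sqrt (u ^ 4 + u\<^sup>2) * cos t) ^ p * (sqrt (u ^ 4 + u\<^sup>2) * sin t) ^ q))"
proof -
  obtain \<kappa> G where F: "polar_antideriv p q \<kappa> G"
    using polar_antideriv_exists by blast
  then have G: "hom_poly (p + q) G"
    unfolding polar_antideriv_def by blast
  obtain R\<^sub>0 where R\<^sub>0: "degree R\<^sub>0 \<le> 2 * (p + q)" "poly R\<^sub>0 0 = 0"
    "\<forall>u>0. G (sqrt (u ^ 4 + u\<^sup>2) * cos (\<theta>\<^sub>0 u)) (sqrt (u ^ 4 + u\<^sup>2) * sin (\<theta>\<^sub>0 u)) = poly R\<^sub>0 u"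
    using hom_poly_at_poly_endpoint[OF G assms(1,2)] by blast
  obtain R\<^sub>1 where R\<^sub>1: "degree R\<^sub>1 \<le> 2 * (p + q)" "poly R\<^sub>1 0 = 0"
    "\<forall>u>0. G (sqrt (u ^ 4 + u\<^sup>2) * cos (\<theta>\<^sub>1 u)) (sqrt (u ^ 4 + u\<^sup>2) * sin (\<theta>\<^sub>1 u)) = poly R\<^sub>1 u"
    using hom_poly_at_poly_endpoint[OF G assms(1,3)] by blast
  have angle_part: "arctan_form (p + q) (\<lambda>u. \<kappa> * sqrt (u ^ 4 + u\<^sup>2) ^ (p + q) * (a * arctan u + b))"
  proof (cases "even (p + q)")
    case True
    then obtain k where k: "p + q = 2 * k"
      by blast
    have "sqrt (u ^ 4 + u\<^sup>2) ^ (p + q) = (u ^ 4 + u\<^sup>2) ^ k" for u :: real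
      unfolding k power_mult by (simp add: add_nonneg_nonneg)
    then show ?thesis
      using arctan_form_cmult[OF arctan_form_power[of k "p + q" a b], of \<kappa>] k assms(1)
      by (simp add: mult.assoc)
  next
    case False
    then have "\<kappa> = 0"
      using F unfolding polar_antideriv_def by blast
    then show ?thesis
      using arctan_form_cong[OF arctan_form_poly[of 0]] by simp
  qed
  have "arctan_form (p + q) (\<lambda>u. poly (R\<^sub>0 - R\<^sub>1) u + \<kappa> * sqrt (u ^ 4 + u\<^sup>2) ^ (p + q) * (a * arctan u + b))"
    using R\<^sub>0(1,2) R\<^sub>1(1,2)
    by (intro arctan_form_add arctan_form_poly angle_part) (auto intro: order.trans[OF degree_diff_le])
  then show ?thesis
  proof (rule arctan_form_cong)
    fix u :: real
    assume u: "0 < u"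
    show "poly (R\<^sub>0 - R\<^sub>1) u + \<kappa> * sqrt (u ^ 4 + u\<^sup>2) ^ (p + q) * (a * arctan u + b)
      = integral {\<theta>\<^sub>1 u..\<theta>\<^sub>0 u} (\<lambda>t. (sqrt (u ^ 4 + u\<^sup>2) * cos t) ^ p * (sqrt (u ^ 4 + u\<^sup>2) * sin t) ^ q)"
      using integral_polar_antideriv[OF F assms(4)[OF u]] R\<^sub>0(3) R\<^sub>1(3) assms(5)[OF u] u by simp
  qed
qed

lemma arc_int_bipoly:
  "arc_int (bipoly c n) (bipoly d n) h t\<^sub>0 t\<^sub>1 =
    (\<Sum>i\<le>n. \<Sum>j\<le>n - i.
        d i j * integral {t\<^sub>1..t\<^sub>0} (\<lambda>t. (sqrt h * cos t) ^ i * (sqrt h * sin t) ^ Suc j)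
      + c i j * integral {t\<^sub>1..t\<^sub>0} (\<lambda>t. (sqrt h * cos t) ^ Suc i * (sqrt h * sin t) ^ j))"
proof -
  have "bipoly d n (sqrt h * cos t) (sqrt h * sin t) * (- sqrt h * sin t)
      - bipoly c n (sqrt h * cos t) (sqrt h * sin t) * (sqrt h * cos t)
    = - (\<Sum>i\<le>n. \<Sum>j\<le>n - i. d i j * ((sqrt h * cos t) ^ i * (sqrt h * sin t) ^ Suc j)
      + c i j * ((sqrt h * cos t) ^ Suc i * (sqrt h * sin t) ^ j))" for t
    unfolding bipoly_def sum_distrib_right sum_negf[symmetric] sum_subtractf[symmetric]
    by (intro sum.cong refl) (simp add: algebra_simps)
  then show ?thesis
    unfolding arc_int_def
    by (simp add: integral_sum integral_add integrable_continuous_interval continuous_intros)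
qed

lemma arctan_form_arc_int:
  assumes "poly_endpoint \<theta>\<^sub>0" "poly_endpoint \<theta>\<^sub>1"
    and "\<And>u. 0 < u \<Longrightarrow> \<theta>\<^sub>1 u \<le> \<theta>\<^sub>0 u"
    and "\<And>u. 0 < u \<Longrightarrow> \<theta>\<^sub>0 u - \<theta>\<^sub>1 u = a * arctan u + b"
  shows "arctan_form (n + 1) (\<lambda>u. arc_int (bipoly c n) (bipoly d n) (u ^ 4 + u\<^sup>2) (\<theta>\<^sub>0 u) (\<theta>\<^sub>1 u))"
  unfolding arc_int_bipoly
  by (intro arctan_form_sum arctan_form_add arctan_form_cmult
      arctan_form_mono[OF arctan_form_arc_monomial[OF _ assms]]) auto

lemma uh_quartic: "0 < u \<Longrightarrow> uh (u ^ 4 + u\<^sup>2) = u"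
proof -
  assume "0 < u"
  moreover have "1 + 4 * (u ^ 4 + u\<^sup>2) = (2 * u\<^sup>2 + 1)\<^sup>2"
    by (simp add: algebra_simps power2_eq_square power4_eq_xxxx)
  ultimately show ?thesis
    unfolding uh_def by simp
qed

lemma arctan_form_Mfun: "arctan_form (n + 1) (\<lambda>u. Mfun n a b (u ^ 4 + u\<^sup>2))"
proof -
  have reflected: "poly_endpoint (\<lambda>u. - arctan u)"
    by (rule poly_endpoint_reflect[OF poly_endpoint_arctan, of _ 1 "-1"]) simp
  have shifted: "poly_endpoint (\<lambda>u. arctan u - pi)" "poly_endpoint (\<lambda>u. pi + arctan u)"
    by (rule poly_endpoint_reflect[OF poly_endpoint_arctan, of _ "-1" "-1"]; simp add: cos_diff sin_diff)+
  have supplementary: "poly_endpoint (\<lambda>u. pi - arctan u)"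
    by (rule poly_endpoint_reflect[OF poly_endpoint_arctan, of _ "-1" 1]) (simp add: cos_diff sin_diff)
  have "0 < arctan u" "2 * arctan u \<le> pi" if "0 < u" for u
    using that arctan_ubound[of u] by simp_all
  then have "arctan_form (n + 1) (\<lambda>u.
      arc_int (bipoly (a 1) n) (bipoly (b 1) n) (u ^ 4 + u\<^sup>2) (arctan u) (- arctan u)
    + arc_int (bipoly (a 2) n) (bipoly (b 2) n) (u ^ 4 + u\<^sup>2) (- arctan u) (arctan u - pi)
    + arc_int (bipoly (a 3) n) (bipoly (b 3) n) (u ^ 4 + u\<^sup>2) (pi + arctan u) (pi - arctan u)
    + arc_int (bipoly (a 4) n) (bipoly (b 4) n) (u ^ 4 + u\<^sup>2) (pi - arctan u) (arctan u))"
    using poly_endpoint_arctan reflected shifted supplementary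
    by (intro arctan_form_add arctan_form_arc_int[where a = 2 and b = 0]
        arctan_form_arc_int[where a = "-2" and b = pi]) auto
  then show ?thesis
    by (rule arctan_form_cong) (simp add: Mfun_def Let_def uh_quartic)
qed

lemma integral_sqrt_one_minus_square:
  fixes c :: real
  assumes "0 \<le> c" "c < 1"
  shows "integral {0..c} (\<lambda>t. sqrt (1 - t\<^sup>2)) = (arcsin c + c * sqrt (1 - c\<^sup>2)) / 2"
proof -
  define \<Phi> where "\<Phi> t = (arcsin t + t * sqrt (1 - t\<^sup>2)) / 2" for t :: real
  have "((\<lambda>t. sqrt (1 - t\<^sup>2)) has_integral \<Phi> c - \<Phi> 0) {0..c}"
  proof (rule fundamental_theorem_of_calculus)
    fix t
    assume "t \<in> {0..c}"
    then have t: "-1 < t" "t < 1" "0 < 1 - t\<^sup>2"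
      using assms by (auto simp: abs_square_less_1)
    then have "(\<Phi> has_real_derivative
        (inverse (sqrt (1 - t\<^sup>2)) + (sqrt (1 - t\<^sup>2) - t * t * inverse (sqrt (1 - t\<^sup>2)))) / 2) (at t)"
      unfolding \<Phi>_def by (auto intro!: derivative_eq_intros simp: power2_eq_square)
    moreover have "inverse (sqrt (1 - t\<^sup>2)) - t * t * inverse (sqrt (1 - t\<^sup>2)) = sqrt (1 - t\<^sup>2)"
      using t(3) by (simp add: field_simps power2_eq_square flip: real_sqrt_mult_self[of "1 - t\<^sup>2"])
    ultimately have "(\<Phi> has_real_derivative sqrt (1 - t\<^sup>2)) (at t)"
      by (auto elim: DERIV_cong)
    then show "(\<Phi> has_vector_derivative sqrt (1 - t\<^sup>2)) (at t within {0..c})"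
      by (simp add: has_real_derivative_iff_has_vector_derivative[symmetric] has_field_derivative_at_within)
  qed (fact assms(1))
  then show ?thesis
    by (simp add: integral_unique \<Phi>_def)
qed

lemma arctan_eq_integral_sqrt_one_minus_square:
  fixes u :: real
  assumes "0 < u"
  shows "arctan u = pi / 2 + u / (1 + u\<^sup>2) - 2 * integral {0..1 / sqrt (1 + u\<^sup>2)} (\<lambda>t. sqrt (1 - t\<^sup>2))"
proof -
  define c where "c = 1 / sqrt (1 + u\<^sup>2)"
  have c: "0 \<le> c" "c < 1"
    using assms unfolding c_def by (simp_all add: divide_less_eq add_pos_nonneg)
  have "c = sin (pi / 2 - arctan u)"
    unfolding c_def by (simp add: sin_diff cos_arctan)
  moreover have "0 < arctan u" "arctan u < pi / 2"
    using assms arctan_ubound[of u] by simp_all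
  ultimately have "arcsin c = pi / 2 - arctan u"
    by (simp only:) (intro arcsin_sin; linarith)
  moreover have "1 - c\<^sup>2 = (u / sqrt (1 + u\<^sup>2))\<^sup>2"
    using add_pos_nonneg[of 1 "u\<^sup>2"] unfolding c_def by (simp add: power_divide field_simps)
  then have "sqrt (1 - c\<^sup>2) = u / sqrt (1 + u\<^sup>2)"
    using assms by simp
  ultimately show ?thesis
    using integral_sqrt_one_minus_square[OF c] unfolding c_def
    by (simp add: add_pos_nonneg flip: power2_eq_square)
qed

lemma poly_eq_mult_synthetic_div_0: "poly p 0 = 0 \<Longrightarrow> poly p x = x * poly (synthetic_div p 0) x"
proof -
  assume "poly p 0 = 0"
  then have "p = pCons 0 (synthetic_div p 0)"
    using synthetic_div_correct[of p 0] by simp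
  then show ?thesis
    by (metis poly_pCons add_0)
qed

lemma arctan_form_imp_integral_form:
  assumes "arctan_form N f" "2 \<le> N"
  shows "\<exists>S Q :: real poly. degree S \<le> 2 * N \<and> poly S 0 = 0 \<and> degree Q \<le> N div 2 - 1 \<and>
    (\<forall>u>0. f u = poly S u + (u ^ 4 + u\<^sup>2) * poly Q (u ^ 4 + u\<^sup>2) *
       integral {0..1 / sqrt (1 + u\<^sup>2)} (\<lambda>t. sqrt (1 - t\<^sup>2)))"
proof -
  obtain R T :: "real poly" where R: "degree R \<le> 2 * N" "poly R 0 = 0"
    and T: "degree T \<le> N div 2" "poly T 0 = 0"
    and f: "\<forall>u>0. f u = poly R u + poly T (u ^ 4 + u\<^sup>2) * arctan u"
    using assms(1) unfolding arctan_form_def by blast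
  define Q where "Q = synthetic_div T 0"
  have TQ: "poly T h = h * poly Q h" for h
    unfolding Q_def using T(2) by (rule poly_eq_mult_synthetic_div_0)
  have Q: "degree Q \<le> N div 2 - 1"
    unfolding Q_def degree_synthetic_div using T(1) by simp
  define S where "S = R + smult (pi / 2) (T \<circ>\<^sub>p quartic) + [:0, 0, 0, 1:] * (Q \<circ>\<^sub>p quartic)"
  have "degree (T \<circ>\<^sub>p quartic) \<le> 2 * N" "degree ([:0, 0, 0, 1:] * (Q \<circ>\<^sub>p quartic)) \<le> 2 * N"
    using T(1) Q assms(2) degree_mult_le[of "[:0, 0, 0, 1:]" "Q \<circ>\<^sub>p quartic"]
    by (simp_all add: degree_pcompose degree_quartic)
  then have "degree S \<le> 2 * N"
    unfolding S_def using R(1) by (intro degree_add_le) (auto intro: order.trans[OF degree_smult_le])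
  moreover have "poly S 0 = 0"
    using R(2) T(2) by (simp add: S_def poly_pcompose poly_quartic)
  moreover have "f u = poly S u + (u ^ 4 + u\<^sup>2) * poly (smult (-2) Q) (u ^ 4 + u\<^sup>2) *
       integral {0..1 / sqrt (1 + u\<^sup>2)} (\<lambda>t. sqrt (1 - t\<^sup>2))" if "0 < u" for u
  proof -
    define h where "h = u ^ 4 + u\<^sup>2"
    define I where "I = integral {0..1 / sqrt (1 + u\<^sup>2)} (\<lambda>t. sqrt (1 - t\<^sup>2))"
    have "0 < 1 + u\<^sup>2"
      by (simp add: add_pos_nonneg)
    then have hu: "h * (u / (1 + u\<^sup>2)) = u ^ 3"
      unfolding h_def by (simp add: field_simps power2_eq_square power3_eq_cube power4_eq_xxxx)
    have "f u = poly R u + h * poly Q h * arctan u"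
      using f that TQ[of h] unfolding h_def by simp
    also have "\<dots> = poly R u + pi / 2 * (h * poly Q h) + h * (u / (1 + u\<^sup>2)) * poly Q h
        - 2 * (h * poly Q h * I)"
      unfolding arctan_eq_integral_sqrt_one_minus_square[OF that] I_def[symmetric]
      by (simp add: algebra_simps)
    also have "\<dots> = poly S u - 2 * (h * poly Q h * I)"
      unfolding hu by (simp add: S_def poly_pcompose poly_quartic TQ h_def power3_eq_cube)
    finally show ?thesis
      unfolding h_def I_def by simp
  qed
  ultimately show ?thesis
    using Q by (intro exI[of _ S] exI[of _ "smult (-2) Q"]) auto
qed

theorem mainTheorem9:
  fixes n :: nat and a b :: "nat \<Rightarrow> nat \<Rightarrow> nat \<Rightarrow> real"
  assumes "n \<ge> 1"
  shows "\<exists>P Q :: real poly. degree P \<le> 2 * n + 1 \<and> degree Q \<le> (n - 1) div 2 \<and>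
    (\<forall>u::real. u > 0 \<longrightarrow>
       Mfun n a b (u ^ 4 + u ^ 2) =
         u * poly P u + (u ^ 4 + u ^ 2) * poly Q (u ^ 4 + u ^ 2) *
           integral {0..1 / sqrt (1 + u ^ 2)} (\<lambda>t. sqrt (1 - t ^ 2)))"
proof -
  have "2 \<le> n + 1"
    using assms by simp
  then obtain S Q :: "real poly" where S: "degree S \<le> 2 * (n + 1)" "poly S 0 = 0"
    and Q: "degree Q \<le> (n + 1) div 2 - 1"
    and M: "\<forall>u>0. Mfun n a b (u ^ 4 + u\<^sup>2) = poly S u + (u ^ 4 + u\<^sup>2) * poly Q (u ^ 4 + u\<^sup>2) *
       integral {0..1 / sqrt (1 + u\<^sup>2)} (\<lambda>t. sqrt (1 - t\<^sup>2))"
    using arctan_form_imp_integral_form[OF arctan_form_Mfun] by blast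
  define P where "P = synthetic_div S 0"
  have "degree P \<le> 2 * n + 1"
    unfolding P_def degree_synthetic_div using S(1) by simp
  moreover have "degree Q \<le> (n - 1) div 2"
    using Q assms by linarith
  moreover have "poly S u = u * poly P u" for u
    unfolding P_def using S(2) by (rule poly_eq_mult_synthetic_div_0)
  ultimately show ?thesis
    using M by (intro exI[of _ P] exI[of _ Q]) simp
qed

end
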